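(* Let $d\ge2$, let $-\infty\le a<b\le\infty$, and let $\phi\in C^{(d)}(a,b)$ satisfy $\phi^{(j)}(t)>0$ for all $t\in(a,b)$ and $j=0,1,\dots,d$, with $\phi^{(d)}$ nondecreasing on $(a,b)$. Let $$\gamma(t)=\Big(t,\frac{t^2}{2},\dots,\frac{t^{d-1}}{(d-1)!},\phi(t)\Big),\qquad \omega=(\phi^{(d)})^{2/(d^2+d)},$$ and suppose there is a constant $A$ such that $\big(\omega(s_1)\omega(s_2)\big)^{1/2}\le A\,\omega\big(\tfrac{s_1+s_2}{2}\big)$ for all $s_1,s_2\in(a,b)$. Fix a choice of signs and let $J(t_1,\dots,t_d)$ be the absolute value of the Jacobian determinant of the map $$(t_1,\dots,t_d)\mapsto \gamma(t_1)\pm\gamma(t_2)\pm\cdots\pm\gamma(t_d).$$ Let $n_1\le\cdots\le n_d$ be positive numbers with $n_1+\cdots+n_d=d(d+1)/2$. Suppose $\{i_1,\dots,i_d\}=\{1,\dots,d\}$ and $a<t_{i_1}<\cdots<t_{i_d}<b$. Then $$J(t_1,\dots,t_d)\ge c\,\Big(\prod_{j=1}^d\omega(t_{i_j})^{n_j}\Big)\,V(t_1,\dots,t_d),\qquad V(t_1,\dots,t_d)=\Big|\prod_{1\le i<j\le d}(t_j-t_i)\Big|,$$ where $c>0$ depends only on $A$ and on $n_1,\dots,n_d$. *)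

theory Defs
  imports "HOL-Analysis.Analysis" "Jordan_Normal_Form.Determinant"
begin

definition ivl :: "ereal \<Rightarrow> ereal \<Rightarrow> real set" where
  "ivl a b = {t. a < ereal t \<and> ereal t < b}"

definition Cd_on :: "nat \<Rightarrow> real set \<Rightarrow> (real \<Rightarrow> real) \<Rightarrow> bool" where
  "Cd_on d S phi \<longleftrightarrow>
     (\<forall>j<d. \<forall>t\<in>S. ((deriv ^^ j) phi has_real_derivative (deriv ^^ Suc j) phi t) (at t))
     \<and> continuous_on S ((deriv ^^ d) phi)"

definition gam :: "nat \<Rightarrow> (real \<Rightarrow> real) \<Rightarrow> nat \<Rightarrow> real \<Rightarrow> real" where
  "gam d phi k t = (if k + 1 < d then t ^ (k + 1) / fact (k + 1) else phi t)"

definition Fmap :: "nat \<Rightarrow> (real \<Rightarrow> real) \<Rightarrow> (nat \<Rightarrow> real) \<Rightarrow> (nat \<Rightarrow> real) \<Rightarrow> nat \<Rightarrow> real" where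
  "Fmap d phi \<sigma> t k = (\<Sum>i<d. \<sigma> i * gam d phi k (t i))"

definition Jac :: "nat \<Rightarrow> (real \<Rightarrow> real) \<Rightarrow> (nat \<Rightarrow> real) \<Rightarrow> (nat \<Rightarrow> real) \<Rightarrow> real" where
  "Jac d phi \<sigma> t = \<bar>det (mat d d (\<lambda>(k, i). deriv (\<lambda>s. Fmap d phi \<sigma> (t(i := s)) k) (t i)))\<bar>"

definition Vand :: "nat \<Rightarrow> (nat \<Rightarrow> real) \<Rightarrow> real" where
  "Vand d t = \<bar>\<Prod>j<d. \<Prod>i<j. (t j - t i)\<bar>"

end

theory Submission
  imports Defs
begin

text \<open>The Jacobian matrix is \<open>diag(1/k!) \<cdot> W \<cdot> diag(\<sigma>)\<close>, where \<open>W\<close> has rows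
  \<open>1, t, \<dots>, t\<^sup>d\<^sup>-\<^sup>2, \<phi>'(t)\<close> evaluated at the nodes. Expanding \<open>det W\<close> along its last row shows
  that it is the Vandermonde determinant times the divided difference \<open>\<phi>'[t\<^sub>1, \<dots>, t\<^sub>d]\<close>,
  so everything reduces to a lower bound for this divided difference at the sorted nodes
  \<open>y\<^sub>1 < \<dots> < y\<^sub>d\<close>.

  In logarithmic form the doubling condition makes \<open>ln \<phi>\<^sup>(\<^sup>d\<^sup>)\<close> midpoint concave up to a
  constant; iterating it towards \<open>y\<^sub>d\<close> gives
  \<open>\<phi>\<^sup>(\<^sup>d\<^sup>)(s) \<ge> c \<phi>\<^sup>(\<^sup>d\<^sup>)(y\<^sub>d) ((s - y\<^sub>1) / (y\<^sub>d - y\<^sub>1))\<^sup>M\<close> on \<open>[y\<^sub>1, y\<^sub>d]\<close> with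
  \<open>M \<approx> 2 ln (\<phi>\<^sup>(\<^sup>d\<^sup>)(y\<^sub>d) / \<phi>\<^sup>(\<^sup>d\<^sup>)(y\<^sub>1))\<close>. Comparing \<open>\<phi>'\<close> with a power through the mean value
  theorem for divided differences yields \<open>\<phi>'[y] \<ge> c \<phi>\<^sup>(\<^sup>d\<^sup>)(y\<^sub>d) / (d + M)\<^sup>d\<^sup>-\<^sup>1\<close>, which is at
  least \<open>c \<phi>\<^sup>(\<^sup>d\<^sup>)(y\<^sub>1)\<^sup>\<alpha> \<phi>\<^sup>(\<^sup>d\<^sup>)(y\<^sub>d)\<^sup>1\<^sup>-\<^sup>\<alpha>\<close> for \<open>\<alpha> = 2 n\<^sub>1 / (d\<^sup>2 + d)\<close>. Finally, since
  \<open>\<phi>\<^sup>(\<^sup>d\<^sup>)\<close> is nondecreasing, \<open>\<Prod>\<^sub>j \<omega>(y\<^sub>j) ^ n\<^sub>j\<close> is at most this weighted geometric mean.\<close>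

section \<open>Divided differences\<close>

text \<open>\<open>divided_diff m f x\<close> is the divided difference \<open>f[x\<^sub>0, \<dots>, x\<^sub>m\<^sub>-\<^sub>1]\<close> of order \<open>m - 1\<close>,
  written in Lagrange form.\<close>

definition divided_diff :: "nat \<Rightarrow> (real \<Rightarrow> real) \<Rightarrow> (nat \<Rightarrow> real) \<Rightarrow> real" where
  "divided_diff m f x = (\<Sum>i<m. f (x i) / (\<Prod>j\<in>{..<m}-{i}. x i - x j))"

lemma Suc_chain_less:
  fixes z :: "nat \<Rightarrow> 'a::order"
  assumes chain: "\<forall>i<n. z i < z (Suc i)" and "i < j" "j \<le> n"
  shows "z i < z j"
  using assms(2,3)
proof (induction j)
  case (Suc j)
  then show ?case
    using chain by (cases "i = j") (auto intro: order.strict_trans)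
qed simp

lemma Suc_chain_le:
  fixes z :: "nat \<Rightarrow> 'a::order"
  assumes "\<forall>i<n. z i < z (Suc i)" "i \<le> j" "j \<le> n"
  shows "z i \<le> z j"
  using Suc_chain_less[OF assms(1), of i j] assms(2,3) by (cases "i = j") auto

lemma Suc_chain_inj_on:
  fixes z :: "nat \<Rightarrow> 'a::linorder"
  assumes "\<forall>i<n. z i < z (Suc i)"
  shows "inj_on z {..<Suc n}"
proof (rule inj_onI)
  fix i j assume "i \<in> {..<Suc n}" "j \<in> {..<Suc n}" "z i = z j"
  then show "i = j"
    using Suc_chain_less[OF assms, of i j] Suc_chain_less[OF assms, of j i]
    by (cases i j rule: linorder_cases) auto
qed

lemma prod_diff_nonzero:
  fixes t :: "nat \<Rightarrow> 'a::idom"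
  assumes "inj_on t {..<d}" "i < d"
  shows "(\<Prod>j\<in>{..<d}-{i}. t i - t j) \<noteq> 0"
  using assms by (auto simp: inj_on_def)

lemma divided_diff_diff:
  "divided_diff m (\<lambda>s. f s - c * g s) x = divided_diff m f x - c * divided_diff m g x"
  unfolding divided_diff_def by (simp add: sum_subtractf sum_distrib_left diff_divide_distrib)

lemma divided_diff_linear_factor:
  assumes inj: "inj_on x {..<Suc m}"
  shows "divided_diff (Suc m) (\<lambda>s. (s - a) * f s) x
           = (x m - a) * divided_diff (Suc m) f x + divided_diff m f x"
proof -
  let ?P = "\<lambda>i. \<Prod>j\<in>{..<Suc m}-{i}. x i - x j"
  have "divided_diff (Suc m) (\<lambda>s. (s - a) * f s) x - (x m - a) * divided_diff (Suc m) f x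
      = (\<Sum>i<Suc m. (x i - x m) * f (x i) / ?P i)"
    unfolding divided_diff_def sum_distrib_left sum_subtractf[symmetric]
    by (rule sum.cong) (simp_all add: diff_divide_distrib[symmetric] algebra_simps)
  also have "\<dots> = (\<Sum>i<m. (x i - x m) * f (x i) / ?P i)"
    by simp
  also have "\<dots> = divided_diff m f x"
    unfolding divided_diff_def
  proof (rule sum.cong[OF refl])
    fix i assume i: "i \<in> {..<m}"
    have "{..<Suc m}-{i} = insert m ({..<m}-{i})" using i by auto
    moreover have "x i - x m \<noteq> 0" using inj i by (auto simp: inj_on_def)
    ultimately show "(x i - x m) * f (x i) / ?P i = f (x i) / (\<Prod>j\<in>{..<m}-{i}. x i - x j)"
      by simp
  qed
  finally show ?thesis by simp
qed

lemma divided_diff_permute: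
  assumes p: "p permutes {..<d}"
  shows "divided_diff d f (t \<circ> p) = divided_diff d f t"
proof -
  have inj: "inj_on p A" for A
    using permutes_inj[OF p] by (rule inj_on_subset) simp
  have img: "p ` ({..<d}-{i}) = {..<d}-{p i}" if "i < d" for i
    using permutes_image[OF p] inj_on_image_set_diff[OF inj, of "{..<d}" "{i}"] that by auto
  have "divided_diff d f (t \<circ> p) = (\<Sum>i<d. f (t (p i)) / (\<Prod>j\<in>{..<d}-{p i}. t (p i) - t j))"
    unfolding divided_diff_def
    by (rule sum.cong[OF refl]) (simp add: img[symmetric] prod.reindex[OF inj])
  also have "\<dots> = (\<Sum>i\<in>p ` {..<d}. f (t i) / (\<Prod>j\<in>{..<d}-{i}. t i - t j))"
    by (rule sum.reindex[OF inj, symmetric, unfolded comp_def])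
  finally show ?thesis
    unfolding divided_diff_def permutes_image[OF p] .
qed

definition nodal_poly :: "(nat \<Rightarrow> real) \<Rightarrow> nat set \<Rightarrow> real poly" where
  "nodal_poly x I = (\<Prod>j\<in>I. [:- x j, 1:])"

lemma poly_nodal_poly: "poly (nodal_poly x I) s = (\<Prod>j\<in>I. s - x j)"
  unfolding nodal_poly_def poly_prod by simp

lemma degree_nodal_poly: "finite I \<Longrightarrow> degree (nodal_poly x I) = card I"
  unfolding nodal_poly_def by (subst degree_prod_eq_sum_degree) auto

lemma coeff_nodal_poly_card: "finite I \<Longrightarrow> coeff (nodal_poly x I) (card I) = 1"
  using degree_nodal_poly[of I x] lead_coeff_prod[of "\<lambda>j. [:- x j, 1:]" I]
  unfolding nodal_poly_def by simp

lemma Rolle_real_derivative: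
  fixes f f' :: "real \<Rightarrow> real"
  assumes "a < b" "f a = 0" "f b = 0"
    and der: "\<forall>s. a \<le> s \<and> s \<le> b \<longrightarrow> (f has_real_derivative f' s) (at s)"
  shows "\<exists>\<xi>. a < \<xi> \<and> \<xi> < b \<and> f' \<xi> = 0"
proof -
  have "continuous_on {a..b} f"
    using der by (intro continuous_at_imp_continuous_on) (auto intro: DERIV_isCont)
  then obtain z where z: "a < z" "z < b" "DERIV f z :> 0"
    using Rolle[OF assms(1)] assms(2,3) der by (metis less_eq_real_def real_differentiable_def)
  moreover have "DERIV f z :> f' z" using der z by auto
  ultimately show ?thesis using DERIV_unique by blast
qed

lemma Rolle_iterated:
  fixes F :: "nat \<Rightarrow> real \<Rightarrow> real" and z :: "nat \<Rightarrow> real"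
  assumes "\<forall>i<Suc k. z i < z (Suc i)" "\<forall>i\<le>Suc k. F 0 (z i) = 0"
    "\<forall>j<Suc k. \<forall>s. z 0 \<le> s \<and> s \<le> z (Suc k) \<longrightarrow> (F j has_real_derivative F (Suc j) s) (at s)"
  shows "\<exists>\<xi>. z 0 < \<xi> \<and> \<xi> < z (Suc k) \<and> F (Suc k) \<xi> = 0"
  using assms
proof (induction k arbitrary: F z)
  case 0
  then show ?case using Rolle_real_derivative[of "z 0" "z 1" "F 0" "F 1"] by auto
next
  case (Suc k)
  have range: "z 0 \<le> z i \<and> z i \<le> z (Suc (Suc k))" if "i \<le> Suc (Suc k)" for i
    using Suc_chain_le[OF Suc.prems(1)] that by auto
  have "\<forall>i\<in>{..Suc k}. \<exists>w. z i < w \<and> w < z (Suc i) \<and> F 1 w = 0"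
  proof
    fix i assume i: "i \<in> {..Suc k}"
    show "\<exists>w. z i < w \<and> w < z (Suc i) \<and> F 1 w = 0"
    proof (rule Rolle_real_derivative)
      show "z i < z (Suc i)" "F 0 (z i) = 0" "F 0 (z (Suc i)) = 0"
        using Suc.prems(1,2) i by auto
      show "\<forall>s. z i \<le> s \<and> s \<le> z (Suc i) \<longrightarrow> (F 0 has_real_derivative F 1 s) (at s)"
        using Suc.prems(3) range[of i] range[of "Suc i"] i by fastforce
    qed
  qed
  then obtain w where w: "\<And>i. i \<le> Suc k \<Longrightarrow> z i < w i \<and> w i < z (Suc i) \<and> F 1 (w i) = 0"
    by (metis atMost_iff bchoice)
  have "\<exists>\<xi>. w 0 < \<xi> \<and> \<xi> < w (Suc k) \<and> F (Suc (Suc k)) \<xi> = 0"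
  proof (rule Suc.IH[of w "\<lambda>j. F (Suc j)", simplified])
    show "\<forall>i<Suc k. w i < w (Suc i)"
      using w by (metis Suc_leI less_Suc_eq_le less_trans order_less_imp_le)
    show "\<forall>i\<le>Suc k. F (Suc 0) (w i) = 0" using w by simp
    show "\<forall>j<Suc k. \<forall>s. w 0 \<le> s \<and> s \<le> w (Suc k) \<longrightarrow> (F (Suc j) has_real_derivative F (Suc (Suc j)) s) (at s)"
      using Suc.prems(3) w[of 0] w[of "Suc k"] by fastforce
  qed
  then obtain \<xi> where "w 0 < \<xi>" "\<xi> < w (Suc k)" "F (Suc (Suc k)) \<xi> = 0" by blast
  then show ?case using w[of 0] w[of "Suc k"] by (intro exI[of _ \<xi>]) auto
qed

text \<open>The Lagrange interpolant \<open>P\<close> of \<open>F 0\<close> at the nodes has the divided difference as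
  leading coefficient; iterated Rolle applied to \<open>F 0 - P\<close> yields \<open>\<xi>\<close>.\<close>

lemma divided_diff_mean_value:
  fixes F :: "nat \<Rightarrow> real \<Rightarrow> real" and x :: "nat \<Rightarrow> real"
  assumes mono: "\<forall>i<Suc k. x i < x (Suc i)"
    and der: "\<forall>j<Suc k. \<forall>s. x 0 \<le> s \<and> s \<le> x (Suc k) \<longrightarrow> (F j has_real_derivative F (Suc j) s) (at s)"
  shows "\<exists>\<xi>. x 0 < \<xi> \<and> \<xi> < x (Suc k) \<and> F (Suc k) \<xi> = fact (Suc k) * divided_diff (Suc (Suc k)) (F 0) x"
proof -
  define n where "n = Suc (Suc k)"
  have inj: "inj_on x {..<n}" unfolding n_def using Suc_chain_inj_on[OF mono] .
  define w where "w i = (\<Prod>j\<in>{..<n}-{i}. x i - x j)" for i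
  define P where "P = (\<Sum>i<n. Polynomial.smult (F 0 (x i) / w i) (nodal_poly x ({..<n}-{i})))"
  have interp: "poly P (x i) = F 0 (x i)" if i: "i < n" for i
  proof -
    have "poly P (x i) = (\<Sum>j\<in>{i}. F 0 (x j) / w j * (\<Prod>l\<in>{..<n}-{j}. x i - x l))"
      unfolding P_def poly_sum poly_smult poly_nodal_poly
      by (rule sum.mono_neutral_right) (use i in auto)
    then show ?thesis
      using prod_diff_nonzero[OF inj i] by (simp add: w_def)
  qed
  have degP: "degree P \<le> Suc k"
    unfolding P_def
    by (rule degree_sum_le) (auto intro: order.trans[OF degree_smult_le] simp: degree_nodal_poly n_def)
  have coeffP: "coeff P (Suc k) = divided_diff n (F 0) x"
  proof -
    have "coeff (nodal_poly x ({..<n}-{i})) (Suc k) = 1" if "i < n" for i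
      using coeff_nodal_poly_card[of "{..<n}-{i}" x] that by (simp add: n_def)
    then show ?thesis
      unfolding P_def divided_diff_def coeff_sum by (simp add: w_def)
  qed
  define G where "G j s = F j s - poly ((pderiv ^^ j) P) s" for j s
  have "\<exists>\<xi>. x 0 < \<xi> \<and> \<xi> < x (Suc k) \<and> G (Suc k) \<xi> = 0"
  proof (rule Rolle_iterated[OF mono])
    show "\<forall>i\<le>Suc k. G 0 (x i) = 0" using interp by (simp add: G_def n_def)
    show "\<forall>j<Suc k. \<forall>s. x 0 \<le> s \<and> s \<le> x (Suc k) \<longrightarrow> (G j has_real_derivative G (Suc j) s) (at s)"
      using der unfolding G_def by (auto intro!: DERIV_diff)
  qed
  then obtain \<xi> where xi: "x 0 < \<xi>" "\<xi> < x (Suc k)" "G (Suc k) \<xi> = 0" by blast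
  have "degree ((pderiv ^^ Suc k) P) = 0"
    using degP unfolding degree_higher_pderiv by simp
  then have "poly ((pderiv ^^ Suc k) P) \<xi> = coeff ((pderiv ^^ Suc k) P) 0"
    using poly_altdef[of "(pderiv ^^ Suc k) P" \<xi>] by simp
  also have "\<dots> = fact (Suc k) * divided_diff n (F 0) x"
    using coeffP unfolding coeff_higher_pderiv by (simp add: pochhammer_fact)
  finally show ?thesis using xi by (auto simp: G_def n_def)
qed

text \<open>\<open>pow_deriv N a j\<close> is the \<open>j\<close>-th derivative of \<open>\<lambda>s. (s - a) ^ N\<close>.\<close>

definition pow_deriv :: "nat \<Rightarrow> real \<Rightarrow> nat \<Rightarrow> real \<Rightarrow> real" where
  "pow_deriv N a j s = (\<Prod>i<j. real (N - i)) * (s - a) ^ (N - j)"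

lemma pow_deriv_0: "pow_deriv N a 0 = (\<lambda>s. (s - a) ^ N)"
  unfolding pow_deriv_def by auto

lemma pow_deriv_has_real_derivative:
  "(pow_deriv N a j has_real_derivative pow_deriv N a (Suc j) s) (at s)"
  unfolding pow_deriv_def[abs_def]
  by (auto intro!: derivative_eq_intros simp: algebra_simps)

lemma divided_diff_pow_via_mean_value:
  fixes x :: "nat \<Rightarrow> real"
  assumes "\<forall>i<Suc k. x i < x (Suc i)"
  obtains \<xi> where "x 0 < \<xi>"
    "divided_diff (Suc (Suc k)) (\<lambda>s. (s - a) ^ N) x = pow_deriv N a (Suc k) \<xi> / fact (Suc k)"
proof -
  obtain \<xi> where "x 0 < \<xi>"
    "pow_deriv N a (Suc k) \<xi> = fact (Suc k) * divided_diff (Suc (Suc k)) (pow_deriv N a 0) x"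
    using divided_diff_mean_value[OF assms, of "pow_deriv N a"] pow_deriv_has_real_derivative by blast
  then show ?thesis
    using that[of \<xi>] by (simp add: pow_deriv_0)
qed

lemma divided_diff_pow_nonneg:
  fixes x :: "nat \<Rightarrow> real"
  assumes mono: "\<forall>i<m. x i < x (Suc i)" and a: "a \<le> x 0"
  shows "0 \<le> divided_diff (Suc m) (\<lambda>s. (s - a) ^ N) x"
proof (cases m)
  case 0
  then show ?thesis using a by (simp add: divided_diff_def)
next
  case (Suc k)
  then obtain \<xi> where "x 0 < \<xi>"
    "divided_diff (Suc m) (\<lambda>s. (s - a) ^ N) x = pow_deriv N a (Suc k) \<xi> / fact (Suc k)"
    using divided_diff_pow_via_mean_value mono by blast
  moreover have "0 \<le> pow_deriv N a (Suc k) \<xi>"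
    unfolding pow_deriv_def using a \<open>x 0 < \<xi>\<close> by (intro mult_nonneg_nonneg prod_nonneg) auto
  ultimately show ?thesis by simp
qed

lemma divided_diff_pow_eq_1:
  fixes x :: "nat \<Rightarrow> real"
  assumes "\<forall>i<m. x i < x (Suc i)"
  shows "divided_diff (Suc m) (\<lambda>s. (s - a) ^ m) x = 1"
proof (cases m)
  case 0
  then show ?thesis by (simp add: divided_diff_def)
next
  case (Suc k)
  then obtain \<xi> where
    "divided_diff (Suc m) (\<lambda>s. (s - a) ^ m) x = pow_deriv m a (Suc k) \<xi> / fact (Suc k)"
    using divided_diff_pow_via_mean_value assms by blast
  moreover have "pow_deriv m a (Suc k) \<xi> = fact (Suc k)"
    unfolding pow_deriv_def Suc fact_prod_rev[of "Suc k"] by (simp add: atLeast0LessThan)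
  ultimately show ?thesis by simp
qed

lemma divided_diff_pow_lower:
  fixes x :: "nat \<Rightarrow> real"
  assumes mono: "\<forall>i<m. x i < x (Suc i)" and a: "a \<le> x 0" and m: "0 < m"
  shows "(x m - a) ^ M \<le> divided_diff (Suc m) (\<lambda>s. (s - a) ^ (m + M)) x"
proof (induction M)
  case 0
  then show ?case using divided_diff_pow_eq_1[OF mono] by simp
next
  case (Suc M)
  have xm: "a \<le> x m" using a Suc_chain_le[OF mono, of 0 m] by simp
  have nonneg: "0 \<le> divided_diff m (\<lambda>s. (s - a) ^ (m + M)) x"
    using divided_diff_pow_nonneg[of "m - 1" x a] mono a m by simp
  have "divided_diff (Suc m) (\<lambda>s. (s - a) ^ (m + Suc M)) x
      = divided_diff (Suc m) (\<lambda>s. (s - a) * (s - a) ^ (m + M)) x"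
    by simp
  also have "\<dots> = (x m - a) * divided_diff (Suc m) (\<lambda>s. (s - a) ^ (m + M)) x
                  + divided_diff m (\<lambda>s. (s - a) ^ (m + M)) x"
    by (rule divided_diff_linear_factor[OF Suc_chain_inj_on[OF mono]])
  also have "\<dots> \<ge> (x m - a) * (x m - a) ^ M"
    using Suc.IH xm nonneg by (simp add: add_increasing2 mult_left_mono)
  finally show ?case by simp
qed

text \<open>Compare \<open>F\<close> with \<open>C / P \<cdot> (s - x\<^sub>0)\<^sup>k\<^sup>+\<^sup>1\<^sup>+\<^sup>M\<close>, whose \<open>(k+1)\<close>-st derivative is \<open>C (s - x\<^sub>0)\<^sup>M\<close>.\<close>

lemma divided_diff_ge_pow_bound:
  fixes F :: "nat \<Rightarrow> real \<Rightarrow> real" and x :: "nat \<Rightarrow> real"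
  assumes mono: "\<forall>i<Suc k. x i < x (Suc i)"
    and der: "\<forall>j<Suc k. \<forall>s. x 0 \<le> s \<and> s \<le> x (Suc k) \<longrightarrow> (F j has_real_derivative F (Suc j) s) (at s)"
    and cmp: "\<forall>s. x 0 \<le> s \<and> s \<le> x (Suc k) \<longrightarrow> C * (s - x 0) ^ M \<le> F (Suc k) s"
    and C: "0 \<le> C"
  shows "C * (x (Suc k) - x 0) ^ M / (\<Prod>i<Suc k. real (Suc k + M - i))
           \<le> divided_diff (Suc (Suc k)) (F 0) x"
proof -
  define P where "P = (\<Prod>i<Suc k. real (Suc k + M - i))"
  have P: "0 < P" unfolding P_def by (intro prod_pos) auto
  define H where "H j s = F j s - C / P * pow_deriv (Suc k + M) (x 0) j s" for j s
  have top: "pow_deriv (Suc k + M) (x 0) (Suc k) s = P * (s - x 0) ^ M" for s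
    unfolding pow_deriv_def P_def by simp
  obtain \<xi> where xi: "x 0 < \<xi>" "\<xi> < x (Suc k)"
    "H (Suc k) \<xi> = fact (Suc k) * divided_diff (Suc (Suc k)) (H 0) x"
  proof (rule exE[OF divided_diff_mean_value[OF mono]])
    show "\<forall>j<Suc k. \<forall>s. x 0 \<le> s \<and> s \<le> x (Suc k) \<longrightarrow> (H j has_real_derivative H (Suc j) s) (at s)"
      unfolding H_def[abs_def] using der
      by (auto intro!: DERIV_diff DERIV_cmult[of "pow_deriv _ _ _"] pow_deriv_has_real_derivative
               simp del: times_divide_eq_left)
  qed blast
  have "0 \<le> H (Suc k) \<xi>" unfolding H_def top using cmp xi(1,2) P by simp
  then have "0 \<le> divided_diff (Suc (Suc k)) (H 0) x"
    using xi(3) by (metis fact_gt_zero mult_pos_neg not_le)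
  also have "divided_diff (Suc (Suc k)) (H 0) x
      = divided_diff (Suc (Suc k)) (F 0) x - C / P * divided_diff (Suc (Suc k)) (\<lambda>s. (s - x 0) ^ (Suc k + M)) x"
    unfolding H_def pow_deriv_0 by (rule divided_diff_diff)
  finally have "C / P * divided_diff (Suc (Suc k)) (\<lambda>s. (s - x 0) ^ (Suc k + M)) x
                  \<le> divided_diff (Suc (Suc k)) (F 0) x"
    by simp
  moreover have "(x (Suc k) - x 0) ^ M \<le> divided_diff (Suc (Suc k)) (\<lambda>s. (s - x 0) ^ (Suc k + M)) x"
    using divided_diff_pow_lower[of "Suc k" x "x 0" M] mono by simp
  ultimately show ?thesis
    using C P unfolding P_def[symmetric]
    by (smt (verit) divide_nonneg_nonneg mult_left_mono times_divide_eq_left mult.commute)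
qed

section \<open>The Jacobian as a divided difference\<close>

definition alternant :: "nat \<Rightarrow> (real \<Rightarrow> real) \<Rightarrow> (nat \<Rightarrow> real) \<Rightarrow> real Matrix.mat" where
  "alternant d f t = Matrix.mat d d (\<lambda>(k, i). if Suc k < d then t i ^ k else f (t i))"

definition alternant_cofactor :: "nat \<Rightarrow> (nat \<Rightarrow> real) \<Rightarrow> nat \<Rightarrow> real" where
  "alternant_cofactor d t j = cofactor (alternant d (\<lambda>_. 0) t) (d - 1) j"

lemma alternant_carrier [simp]: "alternant d f t \<in> carrier_mat d d"
  by (simp add: alternant_def)

lemma cofactor_alternant: "cofactor (alternant d f t) (d - 1) j = alternant_cofactor d t j"
proof -
  have "mat_delete (alternant d f t) (d - 1) j = mat_delete (alternant d (\<lambda>_. 0) t) (d - 1) j"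
    by (rule eq_matI) (auto simp: mat_delete_def alternant_def)
  then show ?thesis unfolding alternant_cofactor_def cofactor_def by simp
qed

lemma alternant_last_row: "0 < d \<Longrightarrow> j < d \<Longrightarrow> alternant d f t $$ (d - 1, j) = f (t j)"
  by (simp add: alternant_def)

lemma det_alternant_expand:
  assumes "0 < d"
  shows "det (alternant d f t) = (\<Sum>j<d. f (t j) * alternant_cofactor d t j)"
proof -
  have "det (alternant d f t) = (\<Sum>j<d. alternant d f t $$ (d - 1, j) * cofactor (alternant d f t) (d - 1) j)"
    by (rule laplace_expansion_row[OF alternant_carrier]) (use assms in auto)
  also have "\<dots> = (\<Sum>j<d. f (t j) * alternant_cofactor d t j)"
    using assms by (intro sum.cong refl) (metis alternant_last_row cofactor_alternant lessThan_iff)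
  finally show ?thesis .
qed

text \<open>Lower powers in the last row repeat an earlier row, so only the coefficient of
  \<open>x\<^sup>d\<^sup>-\<^sup>1\<close> survives.\<close>

lemma det_alternant_poly:
  assumes d: "0 < d" and p: "degree p < d"
  shows "det (alternant d (poly p) t) = coeff p (d - 1) * det (alternant d (\<lambda>x. x ^ (d - 1)) t)"
proof -
  have repeated: "det (alternant d (\<lambda>x. x ^ k) t) = 0" if "Suc k < d" for k
  proof (rule det_identical_rows[OF alternant_carrier, of k "d - 1"])
    show "row (alternant d (\<lambda>x. x ^ k) t) k = row (alternant d (\<lambda>x. x ^ k) t) (d - 1)"
      by (rule eq_vecI) (use that in \<open>auto simp: alternant_def\<close>)
  qed (use that in auto)
  have "poly p x = (\<Sum>k<d. coeff p k * x ^ k)" for x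
    unfolding poly_altdef by (rule sum.mono_neutral_left) (use p in \<open>auto simp: coeff_eq_0\<close>)
  then have "det (alternant d (poly p) t) = (\<Sum>j<d. (\<Sum>k<d. coeff p k * t j ^ k) * alternant_cofactor d t j)"
    by (simp add: det_alternant_expand[OF d])
  also have "\<dots> = (\<Sum>j<d. \<Sum>k<d. coeff p k * (t j ^ k * alternant_cofactor d t j))"
    by (simp add: sum_distrib_right mult.assoc)
  also have "\<dots> = (\<Sum>k<d. coeff p k * (\<Sum>j<d. t j ^ k * alternant_cofactor d t j))"
    by (subst sum.swap) (simp add: sum_distrib_left)
  also have "\<dots> = (\<Sum>k<d. coeff p k * det (alternant d (\<lambda>x. x ^ k) t))"
    by (simp add: det_alternant_expand[OF d])
  also have "\<dots> = (\<Sum>k\<in>{d - 1}. coeff p k * det (alternant d (\<lambda>x. x ^ k) t))"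
    by (rule sum.mono_neutral_right) (use d repeated in auto)
  finally show ?thesis by simp
qed

text \<open>Taking for the last row the monic nodal polynomial that vanishes at every node but \<open>t i\<close>
  isolates the \<open>i\<close>-th cofactor.\<close>

lemma alternant_cofactor_eq:
  assumes inj: "inj_on t {..<d}" and i: "i < d"
  shows "alternant_cofactor d t i * (\<Prod>j\<in>{..<d}-{i}. t i - t j) = det (alternant d (\<lambda>x. x ^ (d - 1)) t)"
proof -
  let ?l = "nodal_poly t ({..<d}-{i})"
  have d: "0 < d" and card: "card ({..<d}-{i}) = d - 1" using i by auto
  have "det (alternant d (poly ?l) t) = det (alternant d (\<lambda>x. x ^ (d - 1)) t)"
    using det_alternant_poly[OF d, of ?l t] d coeff_nodal_poly_card[of "{..<d}-{i}" t]
      degree_nodal_poly[of "{..<d}-{i}" t]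
    unfolding card by simp
  moreover have "det (alternant d (poly ?l) t) = (\<Sum>j\<in>{i}. poly ?l (t j) * alternant_cofactor d t j)"
    unfolding det_alternant_expand[OF d]
    by (rule sum.mono_neutral_right) (use i in \<open>auto simp: poly_nodal_poly\<close>)
  ultimately show ?thesis by (simp add: poly_nodal_poly mult.commute)
qed

lemma det_alternant_divided_diff:
  assumes inj: "inj_on t {..<d}" and d: "0 < d"
  shows "det (alternant d f t) = det (alternant d (\<lambda>x. x ^ (d - 1)) t) * divided_diff d f t"
proof -
  have "alternant_cofactor d t i = det (alternant d (\<lambda>x. x ^ (d - 1)) t) / (\<Prod>j\<in>{..<d}-{i}. t i - t j)"
    if "i < d" for i
    using alternant_cofactor_eq[OF inj that] prod_diff_nonzero[OF inj that] by (simp add: field_simps)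
  then show ?thesis
    unfolding det_alternant_expand[OF d] divided_diff_def sum_distrib_left
    by (intro sum.cong) auto
qed

lemma det_alternant_vandermonde:
  "inj_on t {..<d} \<Longrightarrow> det (alternant d (\<lambda>x. x ^ (d - 1)) t) = (\<Prod>j<d. \<Prod>i<j. t j - t i)"
proof (induction d)
  case 0
  then show ?case by (simp add: alternant_def)
next
  case (Suc m)
  have inj: "inj_on t {..<m}" using Suc.prems by (auto simp: inj_on_def)
  have "mat_delete (alternant (Suc m) (\<lambda>_. 0) t) m m = alternant m (\<lambda>x. x ^ (m - 1)) t"
    apply (rule eq_matI)
       apply (auto simp: mat_delete_def alternant_def)
    subgoal for i j by (subgoal_tac "i = m - 1") auto
    done
  then have "alternant_cofactor (Suc m) t m = (\<Prod>j<m. \<Prod>i<j. t j - t i)"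
    using Suc.IH[OF inj] unfolding alternant_cofactor_def cofactor_def by simp
  moreover have "{..<Suc m}-{m} = {..<m}" by auto
  ultimately show ?case
    using alternant_cofactor_eq[OF Suc.prems, of m] by simp
qed

lemma det_mat_diag: "det (mat_diag n f) = (\<Prod>i<n. f i)"
proof -
  have "upper_triangular (mat_diag n f)" unfolding upper_triangular_def mat_diag_def by auto
  then have "det (mat_diag n f) = prod_list (diag_mat (mat_diag n f))"
    using det_upper_triangular mat_diag_dim by blast
  also have "\<dots> = (\<Prod>i<n. f i)"
    unfolding prod_list_diag_prod by (simp add: mat_diag_def atLeast0LessThan)
  finally show ?thesis .
qed

definition row_scale :: "nat \<Rightarrow> nat \<Rightarrow> real" where
  "row_scale d k = (if Suc k < d then 1 / fact k else 1)"

lemma gam_has_real_derivative: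
  assumes "Suc k < d \<or> (phi has_real_derivative deriv phi s) (at s)"
  shows "(gam d phi k has_real_derivative
           row_scale d k * (if Suc k < d then s ^ k else deriv phi s)) (at s)"
proof (cases "Suc k < d")
  case True
  have "((\<lambda>s. s ^ Suc k / fact (Suc k)) has_real_derivative real (Suc k) * s ^ k / fact (Suc k)) (at s)"
    using DERIV_pow[of "Suc k" s UNIV] by (intro DERIV_cdivide) simp
  moreover have "real (Suc k) * s ^ k / fact (Suc k) = s ^ k / (fact k :: real)"
    unfolding fact_Suc by (simp del: of_nat_Suc)
  ultimately show ?thesis using True unfolding gam_def[abs_def] by (simp add: row_scale_def)
next
  case False
  then show ?thesis using assms unfolding gam_def[abs_def] by (simp add: row_scale_def)
qed

lemma Fmap_partial_deriv:
  assumes i: "i < d" and ph: "(phi has_real_derivative deriv phi (t i)) (at (t i))"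
  shows "deriv (\<lambda>s. Fmap d phi \<sigma> (t(i := s)) k) (t i)
           = row_scale d k * (if Suc k < d then t i ^ k else deriv phi (t i)) * \<sigma> i"
proof -
  define G where "G = row_scale d k * (if Suc k < d then t i ^ k else deriv phi (t i))"
  have "(gam d phi k has_real_derivative G) (at (t i))"
    unfolding G_def using gam_has_real_derivative ph by blast
  then have "((\<lambda>s. \<Sum>l<d. \<sigma> l * gam d phi k ((t(i := s)) l)) has_real_derivative
             (\<Sum>l<d. if l = i then \<sigma> i * G else 0)) (at (t i))"
    by (intro DERIV_sum) (auto intro: DERIV_cmult)
  moreover have "(\<Sum>l<d. if l = i then \<sigma> i * G else 0) = \<sigma> i * G" using i by simp
  ultimately show ?thesis
    unfolding Fmap_def G_def by (simp add: DERIV_imp_deriv mult.commute)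
qed

lemma Jacobian_matrix_factorization:
  assumes ph: "\<forall>i<d. (phi has_real_derivative deriv phi (t i)) (at (t i))"
  shows "mat_diag d (row_scale d) * alternant d (deriv phi) t * mat_diag d \<sigma>
      = Matrix.mat d d (\<lambda>(k, i). deriv (\<lambda>s. Fmap d phi \<sigma> (t(i := s)) k) (t i))"
proof -
  define W where "W = alternant d (deriv phi) t"
  have W: "W \<in> carrier_mat d d" unfolding W_def by simp
  have "mat_diag d (row_scale d) * W * mat_diag d \<sigma>
      = Matrix.mat d d (\<lambda>(k, i). row_scale d k * W $$ (k, i) * \<sigma> i)"
    unfolding mat_diag_mult_left[OF W] by (subst mat_diag_mult_right) auto
  also have "\<dots> = Matrix.mat d d (\<lambda>(k, i). deriv (\<lambda>s. Fmap d phi \<sigma> (t(i := s)) k) (t i))"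
  proof (rule eq_matI)
    fix k i assume "k < dim_row (Matrix.mat d d (\<lambda>(k, i). deriv (\<lambda>s. Fmap d phi \<sigma> (t(i := s)) k) (t i)))"
      "i < dim_col (Matrix.mat d d (\<lambda>(k, i). deriv (\<lambda>s. Fmap d phi \<sigma> (t(i := s)) k) (t i)))"
    then show "Matrix.mat d d (\<lambda>(k, i). row_scale d k * W $$ (k, i) * \<sigma> i) $$ (k, i) =
          Matrix.mat d d (\<lambda>(k, i). deriv (\<lambda>s. Fmap d phi \<sigma> (t(i := s)) k) (t i)) $$ (k, i)"
      using Fmap_partial_deriv[of i d phi t \<sigma> k] ph by (simp add: W_def alternant_def)
  qed simp_all
  finally show ?thesis unfolding W_def .
qed

lemma abs_prod_signs:
  fixes \<sigma> :: "nat \<Rightarrow> real"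
  assumes "\<forall>i<d. \<sigma> i \<in> {-1, 1}"
  shows "\<bar>\<Prod>i<d. \<sigma> i\<bar> = 1"
proof -
  have "(\<Prod>i<d. \<bar>\<sigma> i\<bar>) = (\<Prod>i<d. 1)" by (rule prod.cong) (use assms in auto)
  then show ?thesis by (simp add: abs_prod)
qed

lemma Jac_eq_divided_diff:
  assumes d: "0 < d" and inj: "inj_on t {..<d}"
    and ph: "\<forall>i<d. (phi has_real_derivative deriv phi (t i)) (at (t i))"
    and sg: "\<forall>i<d. \<sigma> i \<in> {-1, 1}"
  shows "Jac d phi \<sigma> t = (\<Prod>k<d. row_scale d k) * Vand d t * \<bar>divided_diff d (deriv phi) t\<bar>"
proof -
  define W where "W = alternant d (deriv phi) t"
  have W: "W \<in> carrier_mat d d" unfolding W_def by simp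
  have "Jac d phi \<sigma> t = \<bar>(\<Prod>k<d. row_scale d k) * det W * (\<Prod>i<d. \<sigma> i)\<bar>"
    unfolding Jac_def Jacobian_matrix_factorization[OF ph, symmetric] W_def[symmetric]
      det_mult[OF mult_carrier_mat[OF mat_diag_dim W] mat_diag_dim] det_mult[OF mat_diag_dim W]
      det_mat_diag ..
  moreover have "det W = (\<Prod>j<d. \<Prod>i<j. t j - t i) * divided_diff d (deriv phi) t"
    unfolding W_def det_alternant_divided_diff[OF inj d, of "deriv phi"] det_alternant_vandermonde[OF inj] ..
  moreover have "0 < (\<Prod>k<d. row_scale d k)" by (intro prod_pos) (auto simp: row_scale_def)
  ultimately show ?thesis
    using abs_prod_signs[OF sg] unfolding Vand_def by (simp add: abs_mult)
qed

section \<open>Growth of \<open>\<phi>\<^sup>(\<^sup>d\<^sup>)\<close> under the doubling condition\<close>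

lemma halve_le_self:
  fixes L :: real
  assumes "0 \<le> L"
  shows "0 \<le> L / 2 ^ k \<and> L / 2 ^ k \<le> L"
  using assms mult_left_mono[OF one_le_power[of "2::real" k] assms] by (simp add: divide_le_eq)

lemma power_le_exp_neg:
  fixes u D :: real
  assumes "0 \<le> u" "u \<le> 1 - 1 / 2 ^ Suc k" "2 * D \<le> real M"
  shows "u ^ M \<le> exp (- (D / 2 ^ k))"
proof -
  have "1 \<le> 2 * (2::real) ^ k" using one_le_power[of "2::real" k] by argo
  then have "0 \<le> 1 - 1 / (2::real) ^ Suc k" by (simp add: field_simps)
  then have "u ^ M \<le> exp (- (1 / 2 ^ Suc k)) ^ M"
    using assms(1,2) exp_ge_add_one_self[of "- (1 / (2::real) ^ Suc k)"]
    by (intro power_mono) auto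
  also have "\<dots> = exp (- (real M / 2 ^ Suc k))"
    by (simp add: exp_of_nat_mult[symmetric])
  also have "\<dots> \<le> exp (- (D / 2 ^ k))"
    using divide_right_mono[OF assms(3), of "2 ^ Suc k"] by simp
  finally show ?thesis .
qed

text \<open>In logarithmic form the doubling condition says that \<open>ln g\<close> is midpoint concave up to
  the error \<open>\<beta>\<close>. Halving the distance to \<open>b\<close> repeatedly, the gap \<open>ln g(b) - ln g(s)\<close> at
  \<open>s = b - L / 2\<^sup>k\<close> decays geometrically up to an error \<open>2\<beta>\<close>.\<close>

lemma doubling_ln_gap:
  fixes g :: "real \<Rightarrow> real" and y0 b \<beta> :: real
  assumes yb: "y0 < b"
    and dbl: "\<forall>s1 s2. y0 \<le> s1 \<and> s1 \<le> b \<and> y0 \<le> s2 \<and> s2 \<le> b \<longrightarrow>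
                 (ln (g s1) + ln (g s2)) / 2 \<le> \<beta> + ln (g ((s1 + s2) / 2))"
    and beta: "0 \<le> \<beta>"
  shows "ln (g b) - ln (g (b - (b - y0) / 2 ^ k)) \<le> (ln (g b) - ln (g y0)) / 2 ^ k + 2 * \<beta>"
proof (induction k)
  case 0
  then show ?case using beta by simp
next
  case (Suc k)
  let ?m = "\<lambda>k. b - (b - y0) / 2 ^ k"
  have "y0 \<le> ?m k" "?m k \<le> b"
    using yb halve_le_self[of "b - y0" k] by auto
  moreover have mid: "(?m k + b) / 2 = ?m (Suc k)" by (simp add: field_simps)
  ultimately have "(ln (g (?m k)) + ln (g b)) / 2 \<le> \<beta> + ln (g (?m (Suc k)))"
    unfolding mid[symmetric] using yb by (intro dbl[rule_format]) auto
  then have "ln (g b) - ln (g (?m (Suc k))) \<le> \<beta> + (ln (g b) - ln (g (?m k))) / 2"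
    by argo
  also have "\<dots> \<le> \<beta> + ((ln (g b) - ln (g y0)) / 2 ^ k + 2 * \<beta>) / 2" using Suc.IH by argo
  also have "\<dots> = (ln (g b) - ln (g y0)) / 2 ^ Suc k + 2 * \<beta>" by (simp add: field_simps)
  finally show ?case .
qed

lemma doubling_growth_bound_dyadic:
  fixes g :: "real \<Rightarrow> real" and y0 b \<beta> :: real and M :: nat
  assumes yb: "y0 < b"
    and pos: "\<forall>s. y0 \<le> s \<and> s \<le> b \<longrightarrow> 0 < g s"
    and mono: "\<forall>s1 s2. y0 \<le> s1 \<and> s1 \<le> s2 \<and> s2 \<le> b \<longrightarrow> g s1 \<le> g s2"
    and dbl: "\<forall>s1 s2. y0 \<le> s1 \<and> s1 \<le> b \<and> y0 \<le> s2 \<and> s2 \<le> b \<longrightarrow>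
                 (ln (g s1) + ln (g s2)) / 2 \<le> \<beta> + ln (g ((s1 + s2) / 2))"
    and beta: "0 \<le> \<beta>"
    and M: "2 * (ln (g b) - ln (g y0)) \<le> real M" "0 < M"
  shows "y0 \<le> s \<Longrightarrow> s \<le> b - (b - y0) / 2 ^ k \<Longrightarrow>
           g b * exp (- 2 * \<beta>) * ((s - y0) / (b - y0)) ^ M \<le> g s"
proof (induction k arbitrary: s)
  case 0
  then have "s = y0" by simp
  then show ?case using M(2) pos yb by (simp add: zero_power less_imp_le)
next
  case (Suc k)
  let ?m = "\<lambda>k. b - (b - y0) / 2 ^ k"
  have m_in: "y0 \<le> ?m k \<and> ?m k \<le> b" for k
    using yb halve_le_self[of "b - y0" k] by auto
  have gb: "0 < g b" using pos yb by auto
  show ?case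
  proof (cases "s \<le> ?m k")
    case True
    then show ?thesis using Suc by blast
  next
    case False
    let ?D = "ln (g b) - ln (g y0)"
    have "((s - y0) / (b - y0)) ^ M \<le> exp (- (?D / 2 ^ k))"
      using Suc.prems yb M(1) by (intro power_le_exp_neg) (auto simp: field_simps)
    then have "g b * exp (- 2 * \<beta>) * ((s - y0) / (b - y0)) ^ M \<le> g b * exp (- 2 * \<beta>) * exp (- (?D / 2 ^ k))"
      using gb by simp
    also have "\<dots> = exp (ln (g b) + - 2 * \<beta> + - (?D / 2 ^ k))"
      using gb by (simp only: exp_add exp_ln)
    also have "\<dots> \<le> exp (ln (g (?m k)))"
      using doubling_ln_gap[OF yb dbl beta, of k] by simp
    also have "\<dots> = g (?m k)"
      using pos m_in[of k] by simp
    also have "\<dots> \<le> g s"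
      using mono m_in[of k] m_in[of "Suc k"] Suc.prems False by auto
    finally show ?thesis .
  qed
qed

lemma doubling_growth_bound:
  fixes g :: "real \<Rightarrow> real" and y0 b \<beta> :: real and M :: nat
  assumes yb: "y0 < b"
    and pos: "\<forall>s. y0 \<le> s \<and> s \<le> b \<longrightarrow> 0 < g s"
    and mono: "\<forall>s1 s2. y0 \<le> s1 \<and> s1 \<le> s2 \<and> s2 \<le> b \<longrightarrow> g s1 \<le> g s2"
    and dbl: "\<forall>s1 s2. y0 \<le> s1 \<and> s1 \<le> b \<and> y0 \<le> s2 \<and> s2 \<le> b \<longrightarrow>
                 (ln (g s1) + ln (g s2)) / 2 \<le> \<beta> + ln (g ((s1 + s2) / 2))"
    and beta: "0 \<le> \<beta>"
    and M: "2 * (ln (g b) - ln (g y0)) \<le> real M" "0 < M"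
    and s: "y0 \<le> s" "s \<le> b"
  shows "g b * exp (- 2 * \<beta>) * ((s - y0) / (b - y0)) ^ M \<le> g s"
proof (cases "s = b")
  case True
  then show ?thesis using pos beta yb by (simp add: mult_le_cancel_left1)
next
  case False
  then obtain k where "(1/2::real) ^ k < (b - s) / (b - y0)"
    using real_arch_pow_inv[of "(b - s) / (b - y0)" "1/2"] s yb by auto
  then have "s \<le> b - (b - y0) / 2 ^ k" using yb by (simp add: field_simps power_divide)
  then show ?thesis by (rule doubling_growth_bound_dyadic[OF assms(1-7) s(1)])
qed

lemma ln_midpoint_bound:
  fixes g :: "real \<Rightarrow> real" and e A :: real
  assumes e: "0 < e" and g: "0 < g s1" "0 < g s2" "0 < g s3"
    and h: "sqrt (g s1 powr e * g s2 powr e) \<le> A * g s3 powr e"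
  shows "(ln (g s1) + ln (g s2)) / 2 \<le> ln (max A 1) / e + ln (g s3)"
proof -
  have pos: "0 < sqrt (g s1 powr e * g s2 powr e)" using g by simp
  then have Apos: "0 < A * g s3 powr e" using h by linarith
  then have A: "0 < A" using g by (simp add: zero_less_mult_iff)
  have "e * (ln (g s1) + ln (g s2)) / 2 = ln (sqrt (g s1 powr e * g s2 powr e))"
    using g by (simp add: ln_sqrt ln_mult ln_powr algebra_simps)
  also have "\<dots> \<le> ln (A * g s3 powr e)"
    using pos Apos h by simp
  also have "\<dots> = ln A + e * ln (g s3)"
    using A g by (simp add: ln_mult ln_powr)
  also have "\<dots> \<le> ln (max A 1) + e * ln (g s3)"
    using A by simp
  finally show ?thesis
    using e by (simp add: field_simps)
qed

lemma falling_factorial_le_exp: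
  fixes \<alpha> D :: real
  assumes \<alpha>: "0 < \<alpha>" and D: "0 \<le> D" and M: "real M \<le> 2 * D + 2" and m: "0 < m"
  shows "(\<Prod>i<m. real (m + M - i)) \<le> (real m + 2 + 2 * real m / \<alpha>) ^ m * exp (\<alpha> * D)"
proof -
  define K where "K = real m + 2 + 2 * real m / \<alpha>"
  have "real (m + M) \<le> real m + 2 + 2 * D" using M by simp
  also have "\<dots> \<le> K + (real m + 2) * (\<alpha> * D / real m) + 2 * D"
    using \<alpha> D by (simp add: K_def)
  also have "\<dots> = K * (1 + \<alpha> * D / real m)"
    using \<alpha> m by (simp add: K_def field_simps)
  finally have "real (m + M) \<le> K * (1 + \<alpha> * D / real m)" .
  then have "(\<Prod>i<m. real (m + M - i)) \<le> (\<Prod>i<m. K * (1 + \<alpha> * D / real m))"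
    by (intro prod_mono) auto
  also have "\<dots> = (K * (1 + \<alpha> * D / real m)) ^ m"
    by simp
  also have "\<dots> \<le> K ^ m * exp (\<alpha> * D)"
  proof -
    have "0 \<le> \<alpha> * D" using \<alpha> D by simp
    then show ?thesis
      unfolding power_mult_distrib using \<alpha> m
      by (intro mult_left_mono exp_ge_one_plus_x_over_n_power_n) (auto simp: K_def)
  qed
  finally show ?thesis unfolding K_def .
qed

lemma divided_diff_ge_by_doubling:
  fixes F :: "nat \<Rightarrow> real \<Rightarrow> real" and x :: "nat \<Rightarrow> real" and \<beta> :: real and M :: nat
  assumes mono: "\<forall>i<Suc k. x i < x (Suc i)"
    and der: "\<forall>j<Suc k. \<forall>s. x 0 \<le> s \<and> s \<le> x (Suc k) \<longrightarrow> (F j has_real_derivative F (Suc j) s) (at s)"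
    and pos: "\<forall>s. x 0 \<le> s \<and> s \<le> x (Suc k) \<longrightarrow> 0 < F (Suc k) s"
    and Fmono: "\<forall>s1 s2. x 0 \<le> s1 \<and> s1 \<le> s2 \<and> s2 \<le> x (Suc k) \<longrightarrow> F (Suc k) s1 \<le> F (Suc k) s2"
    and dbl: "\<forall>s1 s2. x 0 \<le> s1 \<and> s1 \<le> x (Suc k) \<and> x 0 \<le> s2 \<and> s2 \<le> x (Suc k) \<longrightarrow>
                (ln (F (Suc k) s1) + ln (F (Suc k) s2)) / 2 \<le> \<beta> + ln (F (Suc k) ((s1 + s2) / 2))"
    and beta: "0 \<le> \<beta>"
    and M: "2 * (ln (F (Suc k) (x (Suc k))) - ln (F (Suc k) (x 0))) \<le> real M" "0 < M"
  shows "F (Suc k) (x (Suc k)) * exp (- 2 * \<beta>) / (\<Prod>i<Suc k. real (Suc k + M - i))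
           \<le> divided_diff (Suc (Suc k)) (F 0) x"
proof -
  define L where "L = x (Suc k) - x 0"
  have L: "0 < L" using Suc_chain_less[OF mono, of 0 "Suc k"] by (simp add: L_def)
  have "F (Suc k) (x (Suc k)) * exp (- 2 * \<beta>) / L ^ M * (x (Suc k) - x 0) ^ M / (\<Prod>i<Suc k. real (Suc k + M - i))
           \<le> divided_diff (Suc (Suc k)) (F 0) x"
  proof (rule divided_diff_ge_pow_bound[OF mono der])
    show "\<forall>s. x 0 \<le> s \<and> s \<le> x (Suc k) \<longrightarrow>
            F (Suc k) (x (Suc k)) * exp (- 2 * \<beta>) / L ^ M * (s - x 0) ^ M \<le> F (Suc k) s"
      using doubling_growth_bound[OF _ pos Fmono dbl beta M] L by (simp add: L_def power_divide)
  qed (use pos[rule_format, of "x (Suc k)"] L in \<open>auto simp: L_def\<close>)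
  then show ?thesis using L by (simp add: L_def)
qed

lemma Cd_on_has_real_derivative:
  "Cd_on d S phi \<Longrightarrow> j < d \<Longrightarrow> s \<in> S \<Longrightarrow>
     ((deriv ^^ j) phi has_real_derivative (deriv ^^ Suc j) phi s) (at s)"
  unfolding Cd_on_def by blast

lemma powr_mult_powr_one_minus:
  fixes u v :: real
  assumes "0 < u" "0 < v"
  shows "u powr \<alpha> * v powr (1 - \<alpha>) = v / exp (\<alpha> * (ln v - ln u))"
proof -
  have "u powr \<alpha> * v powr (1 - \<alpha>) = exp (ln v - \<alpha> * (ln v - ln u))"
    using assms by (simp add: powr_def exp_add[symmetric] algebra_simps)
  then show ?thesis using assms by (simp add: exp_diff)
qed

text \<open>With \<open>M \<approx> 2 ln (\<phi>\<^sup>(\<^sup>d\<^sup>)(y\<^sub>m) / \<phi>\<^sup>(\<^sup>d\<^sup>)(y\<^sub>0))\<close> in the growth bound, the loss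
  \<open>(m + M)\<^sup>m\<close> from comparing with a power is absorbed by \<open>(\<phi>\<^sup>(\<^sup>d\<^sup>)(y\<^sub>m) / \<phi>\<^sup>(\<^sup>d\<^sup>)(y\<^sub>0))\<^sup>\<alpha>\<close>.\<close>

lemma divided_diff_deriv_lower:
  fixes phi :: "real \<Rightarrow> real" and y :: "nat \<Rightarrow> real" and S :: "real set" and A e \<alpha> :: real
  assumes dk: "d = Suc (Suc k)"
    and Cd: "Cd_on d S phi"
    and yS: "{y 0..y (Suc k)} \<subseteq> S"
    and gpos: "\<forall>s\<in>S. 0 < (deriv ^^ d) phi s"
    and gmono: "mono_on S ((deriv ^^ d) phi)"
    and dbl: "\<forall>s1\<in>S. \<forall>s2\<in>S. sqrt ((deriv ^^ d) phi s1 powr e * (deriv ^^ d) phi s2 powr e)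
                \<le> A * (deriv ^^ d) phi ((s1 + s2) / 2) powr e"
    and e: "0 < e" and \<alpha>: "0 < \<alpha>"
    and ysort: "\<forall>i<Suc k. y i < y (Suc i)"
  shows "exp (- 2 * (ln (max A 1) / e)) / (real (Suc k) + 2 + 2 * real (Suc k) / \<alpha>) ^ Suc k
          * ((deriv ^^ d) phi (y 0) powr \<alpha> * (deriv ^^ d) phi (y (Suc k)) powr (1 - \<alpha>))
         \<le> divided_diff d (deriv phi) y"
proof -
  define g where "g = (deriv ^^ d) phi"
  define \<beta> where "\<beta> = ln (max A 1) / e"
  define D where "D = ln (g (y (Suc k))) - ln (g (y 0))"
  define M where "M = nat \<lceil>2 * D\<rceil> + 1"
  define P where "P = (\<Prod>i<Suc k. real (Suc k + M - i))"
  define K where "K = real (Suc k) + 2 + 2 * real (Suc k) / \<alpha>"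
  have y0y: "y 0 < y (Suc k)" using Suc_chain_less[OF ysort, of 0 "Suc k"] by simp
  have inS: "s \<in> S" if "y 0 \<le> s" "s \<le> y (Suc k)" for s using yS that by auto
  have gp: "0 < g s" if "y 0 \<le> s" "s \<le> y (Suc k)" for s using gpos inS[OF that] by (simp add: g_def)
  have D: "0 \<le> D"
    using mono_onD[OF gmono inS[of "y 0"] inS[of "y (Suc k)"]] gp[of "y 0"] y0y by (simp add: D_def g_def)
  have ln_dbl: "(ln (g s1) + ln (g s2)) / 2 \<le> \<beta> + ln (g ((s1 + s2) / 2))"
    if "y 0 \<le> s1" "s1 \<le> y (Suc k)" "y 0 \<le> s2" "s2 \<le> y (Suc k)" for s1 s2
    unfolding \<beta>_def using that dbl inS gp
    by (intro ln_midpoint_bound[OF e]) (auto simp: g_def)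
  have low: "(deriv ^^ Suc (Suc k)) phi (y (Suc k)) * exp (- 2 * \<beta>) / P \<le> divided_diff (Suc (Suc k)) ((\<lambda>j. (deriv ^^ Suc j) phi) 0) y"
    unfolding P_def
  proof (rule divided_diff_ge_by_doubling[OF ysort])
    show "\<forall>j<Suc k. \<forall>s. y 0 \<le> s \<and> s \<le> y (Suc k) \<longrightarrow>
            ((deriv ^^ Suc j) phi has_real_derivative (deriv ^^ Suc (Suc j)) phi s) (at s)"
      by (intro allI impI Cd_on_has_real_derivative[OF Cd]) (auto simp: dk intro: inS)
    show "\<forall>s1 s2. y 0 \<le> s1 \<and> s1 \<le> s2 \<and> s2 \<le> y (Suc k) \<longrightarrow>
            (deriv ^^ Suc (Suc k)) phi s1 \<le> (deriv ^^ Suc (Suc k)) phi s2"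
      using gmono inS unfolding dk by (auto intro: mono_onD)
    show "\<forall>s1 s2. y 0 \<le> s1 \<and> s1 \<le> y (Suc k) \<and> y 0 \<le> s2 \<and> s2 \<le> y (Suc k) \<longrightarrow>
            (ln ((deriv ^^ Suc (Suc k)) phi s1) + ln ((deriv ^^ Suc (Suc k)) phi s2)) / 2
              \<le> \<beta> + ln ((deriv ^^ Suc (Suc k)) phi ((s1 + s2) / 2))"
      using ln_dbl unfolding g_def dk by blast
    show "2 * (ln ((deriv ^^ Suc (Suc k)) phi (y (Suc k))) - ln ((deriv ^^ Suc (Suc k)) phi (y 0))) \<le> real M"
      unfolding M_def using D unfolding D_def g_def dk by linarith
  qed (use gp e in \<open>auto simp: \<beta>_def M_def g_def dk\<close>)
  have "real M \<le> 2 * D + 2" unfolding M_def using D by linarith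
  then have P_le: "P \<le> K ^ Suc k * exp (\<alpha> * D)"
    unfolding P_def K_def by (rule falling_factorial_le_exp[OF \<alpha> D]) simp
  have mean: "g (y 0) powr \<alpha> * g (y (Suc k)) powr (1 - \<alpha>) = g (y (Suc k)) / exp (\<alpha> * D)"
    unfolding D_def using gp[of "y 0"] gp[of "y (Suc k)"] y0y by (simp add: powr_mult_powr_one_minus)
  have "exp (- 2 * \<beta>) / K ^ Suc k * (g (y 0) powr \<alpha> * g (y (Suc k)) powr (1 - \<alpha>))
      = g (y (Suc k)) * exp (- 2 * \<beta>) / (K ^ Suc k * exp (\<alpha> * D))"
    unfolding mean by simp
  also have "\<dots> \<le> g (y (Suc k)) * exp (- 2 * \<beta>) / P"
  proof -
    have "0 < P" unfolding P_def by (intro prod_pos) auto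
    then show ?thesis
      using P_le gp[of "y (Suc k)"] y0y by (intro divide_left_mono) auto
  qed
  also have "\<dots> \<le> divided_diff d (deriv phi) y"
    using low by (simp add: g_def dk)
  finally show ?thesis unfolding g_def \<beta>_def K_def .
qed

section \<open>Lower bound for the Jacobian\<close>

lemma prod_powr_le_extremes:
  fixes v n :: "nat \<Rightarrow> real"
  assumes pos: "\<forall>j<Suc m. 0 < v j" and le: "\<forall>j<Suc m. v j \<le> v m"
    and n: "\<forall>j<Suc m. 0 \<le> n j" and e: "0 \<le> e" and sum: "e * (\<Sum>j<Suc m. n j) = 1"
  shows "(\<Prod>j<Suc m. (v j powr e) powr n j) \<le> v 0 powr (e * n 0) * v m powr (1 - e * n 0)"
proof -
  have "(\<Prod>j<Suc m. (v j powr e) powr n j) = v 0 powr (e * n 0) * (\<Prod>j<m. v (Suc j) powr (e * n (Suc j)))"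
    by (subst prod.lessThan_Suc_shift) (simp add: powr_powr)
  also have "(\<Prod>j<m. v (Suc j) powr (e * n (Suc j))) \<le> (\<Prod>j<m. v m powr (e * n (Suc j)))"
    using pos le n e by (intro prod_mono) (auto intro!: powr_mono2)
  also have "\<dots> = v m powr (\<Sum>j<m. e * n (Suc j))"
    using pos[rule_format, of m] powr_sum[of "v m" "\<lambda>j. e * n (Suc j)" "{..<m}"] by simp
  also have "(\<Sum>j<m. e * n (Suc j)) = 1 - e * n 0"
  proof -
    have "e * n 0 + e * (\<Sum>j<m. n (Suc j)) = 1"
      using sum[unfolded sum.lessThan_Suc_shift] by (simp add: algebra_simps)
    then show ?thesis by (simp add: sum_distrib_left)
  qed
  finally show ?thesis using pos by (simp add: mult_left_mono)
qed

lemma is_interval_ivl: "is_interval (ivl a b)"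
  unfolding is_interval_1 ivl_def
proof (intro ballI allI impI, clarsimp)
  fix u v x :: real
  assume "a < ereal u" "ereal v < b" "u \<le> x" "x \<le> v"
  then show "a < ereal x \<and> ereal x < b"
    by (meson ereal_less_eq(3) order_less_le_trans order_le_less_trans)
qed

lemma divided_diff_deriv_ge_prod:
  fixes phi :: "real \<Rightarrow> real" and S :: "real set" and y n :: "nat \<Rightarrow> real" and A e :: real
  assumes dk: "d = Suc (Suc k)" and Cd: "Cd_on d S phi" and yS: "{y 0..y (Suc k)} \<subseteq> S"
    and gpos: "\<forall>s\<in>S. 0 < (deriv ^^ d) phi s"
    and gmono: "mono_on S ((deriv ^^ d) phi)"
    and dbl: "\<forall>s1\<in>S. \<forall>s2\<in>S. sqrt ((deriv ^^ d) phi s1 powr e * (deriv ^^ d) phi s2 powr e)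
                \<le> A * (deriv ^^ d) phi ((s1 + s2) / 2) powr e"
    and e: "0 < e" and n0: "0 < n 0" and n: "\<forall>j<d. 0 \<le> n j" and sum: "e * (\<Sum>j<d. n j) = 1"
    and ysort: "\<forall>i<Suc k. y i < y (Suc i)"
  shows "exp (- 2 * (ln (max A 1) / e)) / (real (d - 1) + 2 + 2 * real (d - 1) / (e * n 0)) ^ (d - 1)
           * (\<Prod>j<d. ((deriv ^^ d) phi (y j) powr e) powr n j)
         \<le> divided_diff d (deriv phi) y"
proof -
  define g where "g = (deriv ^^ d) phi"
  define c where "c = exp (- 2 * (ln (max A 1) / e)) / (real (d - 1) + 2 + 2 * real (d - 1) / (e * n 0)) ^ (d - 1)"
  have yjS: "y j \<in> S" if "j < d" for j
    using yS Suc_chain_le[OF ysort, of 0 j] Suc_chain_le[OF ysort, of j "Suc k"] that by (auto simp: dk)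
  have "(\<Prod>j<d. (g (y j) powr e) powr n j) \<le> g (y 0) powr (e * n 0) * g (y (Suc k)) powr (1 - e * n 0)"
    unfolding dk
  proof (rule prod_powr_le_extremes)
    show "\<forall>j<Suc (Suc k). 0 < g (y j)"
      using gpos yjS unfolding g_def dk by blast
    show "\<forall>j<Suc (Suc k). g (y j) \<le> g (y (Suc k))"
      using Suc_chain_le[OF ysort] yjS mono_onD[OF gmono] unfolding g_def dk by (meson less_Suc_eq_le lessI)
  qed (use n e sum in \<open>simp_all add: dk\<close>)
  moreover have "0 \<le> c" using e n0 by (simp add: c_def)
  ultimately have "c * (\<Prod>j<d. (g (y j) powr e) powr n j)
      \<le> c * (g (y 0) powr (e * n 0) * g (y (Suc k)) powr (1 - e * n 0))"
    by (rule mult_left_mono)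
  also have "\<dots> \<le> divided_diff d (deriv phi) y"
    using divided_diff_deriv_lower[OF dk Cd yS gpos gmono dbl e _ ysort] e n0
    unfolding c_def g_def dk by simp
  finally show ?thesis unfolding c_def g_def .
qed

lemma Jac_lower_bound:
  fixes phi :: "real \<Rightarrow> real" and S :: "real set" and n :: "nat \<Rightarrow> real" and A e :: real
  assumes d: "2 \<le> d" and S: "is_interval S" and Cd: "Cd_on d S phi"
    and gpos: "\<forall>s\<in>S. 0 < (deriv ^^ d) phi s"
    and gmono: "mono_on S ((deriv ^^ d) phi)"
    and dbl: "\<forall>s1\<in>S. \<forall>s2\<in>S. sqrt ((deriv ^^ d) phi s1 powr e * (deriv ^^ d) phi s2 powr e)
                \<le> A * (deriv ^^ d) phi ((s1 + s2) / 2) powr e"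
    and e: "0 < e" and n0: "0 < n 0" and n: "\<forall>j<d. 0 \<le> n j" and sum: "e * (\<Sum>j<d. n j) = 1"
    and sg: "\<forall>i<d. \<sigma> i \<in> {-1, 1}" and p: "p permutes {..<d}"
    and tS: "\<forall>j<d. t (p j) \<in> S" and tsort: "\<forall>j. Suc j < d \<longrightarrow> t (p j) < t (p (Suc j))"
  shows "(\<Prod>k<d. row_scale d k)
           * (exp (- 2 * (ln (max A 1) / e)) / (real (d - 1) + 2 + 2 * real (d - 1) / (e * n 0)) ^ (d - 1))
           * (\<Prod>j<d. ((deriv ^^ d) phi (t (p j)) powr e) powr n j) * Vand d t
         \<le> Jac d phi \<sigma> t"
proof -
  define k where "k = d - 2"
  define y where "y = t \<circ> p"
  define R where "R = (\<Prod>k<d. row_scale d k)"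
  define c where "c = exp (- 2 * (ln (max A 1) / e)) / (real (d - 1) + 2 + 2 * real (d - 1) / (e * n 0)) ^ (d - 1)"
  have dk: "d = Suc (Suc k)" using d by (simp add: k_def)
  have ysort: "\<forall>i<Suc k. y i < y (Suc i)" using tsort by (simp add: y_def dk)
  have yS: "{y 0..y (Suc k)} \<subseteq> S"
  proof
    fix s assume "s \<in> {y 0..y (Suc k)}"
    then show "s \<in> S"
      using S[unfolded is_interval_1, rule_format, of "y 0" "y (Suc k)" s] tS dk by (simp add: y_def)
  qed
  have "inj_on t (p ` {..<d})"
    using Suc_chain_inj_on[OF ysort] unfolding y_def dk by (rule inj_on_imageI)
  then have inj: "inj_on t {..<d}" using permutes_image[OF p] by simp
  have "t i \<in> S" if "i < d" for i
    using tS that permutes_image[OF p] by (metis imageE lessThan_iff)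
  then have ph: "\<forall>i<d. (phi has_real_derivative deriv phi (t i)) (at (t i))"
    using Cd_on_has_real_derivative[OF Cd, of 0] dk by simp
  have "c * (\<Prod>j<d. ((deriv ^^ d) phi (y j) powr e) powr n j) \<le> \<bar>divided_diff d (deriv phi) y\<bar>"
    using divided_diff_deriv_ge_prod[OF dk Cd yS gpos gmono dbl e n0 n sum ysort]
    unfolding c_def by simp
  moreover have "0 \<le> R * Vand d t" unfolding R_def Vand_def
    by (intro mult_nonneg_nonneg prod_nonneg) (auto simp: row_scale_def)
  ultimately have "R * Vand d t * (c * (\<Prod>j<d. ((deriv ^^ d) phi (y j) powr e) powr n j))
      \<le> R * Vand d t * \<bar>divided_diff d (deriv phi) y\<bar>"
    by (rule mult_left_mono)
  also have "\<dots> = Jac d phi \<sigma> t"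
    unfolding R_def y_def divided_diff_permute[OF p] using dk inj ph sg
    by (intro Jac_eq_divided_diff[symmetric]) auto
  finally show ?thesis unfolding R_def c_def y_def by (simp add: algebra_simps)
qed

theorem lemma2p1:
  fixes A :: real and d :: nat and n :: "nat \<Rightarrow> real"
  assumes "d \<ge> 2"
    and "\<forall>j<d. n j > 0"
    and "\<forall>i j. i \<le> j \<longrightarrow> j < d \<longrightarrow> n i \<le> n j"
    and "(\<Sum>j<d. n j) = real (d * (d + 1)) / 2"
  shows "\<exists>c>0. \<forall>(a::ereal) (b::ereal) (phi::real \<Rightarrow> real) (\<sigma>::nat \<Rightarrow> real) (t::nat \<Rightarrow> real) (p::nat \<Rightarrow> nat).
     a < b \<longrightarrow>
     Cd_on d (ivl a b) phi \<longrightarrow>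
     (\<forall>j\<le>d. \<forall>s\<in>ivl a b. (deriv ^^ j) phi s > 0) \<longrightarrow>
     mono_on (ivl a b) ((deriv ^^ d) phi) \<longrightarrow>
     (\<forall>s1\<in>ivl a b. \<forall>s2\<in>ivl a b.
        sqrt (((deriv ^^ d) phi s1) powr (2 / real (d^2 + d)) * ((deriv ^^ d) phi s2) powr (2 / real (d^2 + d)))
          \<le> A * ((deriv ^^ d) phi ((s1 + s2) / 2)) powr (2 / real (d^2 + d))) \<longrightarrow>
     \<sigma> 0 = 1 \<longrightarrow> (\<forall>i<d. \<sigma> i \<in> {-1, 1}) \<longrightarrow>
     p permutes {..<d} \<longrightarrow>
     (\<forall>j<d. t (p j) \<in> ivl a b) \<longrightarrow>
     (\<forall>j. Suc j < d \<longrightarrow> t (p j) < t (p (Suc j))) \<longrightarrow>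
     Jac d phi \<sigma> t \<ge>
       c * (\<Prod>j<d. (((deriv ^^ d) phi (t (p j))) powr (2 / real (d^2 + d))) powr n j) * Vand d t"
proof -
  let ?e = "2 / real (d^2 + d)"
  define c where "c = (\<Prod>k<d. row_scale d k)
    * (exp (- 2 * (ln (max A 1) / ?e)) / (real (d - 1) + 2 + 2 * real (d - 1) / (?e * n 0)) ^ (d - 1))"
  have dd: "0 < real (d^2 + d)" using assms(1) by (simp only: of_nat_0_less_iff)
  then have e: "0 < ?e" by simp
  have sum: "?e * (\<Sum>j<d. n j) = 1"
    using dd unfolding assms(4) by (simp add: power2_eq_square algebra_simps)
  have n0: "0 < n 0" and n: "\<forall>j<d. 0 \<le> n j"
    using assms(1,2) by (auto simp: less_imp_le)
  have "0 \<le> 2 * real (d - 1) / (?e * n 0)" using e n0 by simp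
  then have "0 < real (d - 1) + 2 + 2 * real (d - 1) / (?e * n 0)"
    by (smt (verit) of_nat_0_le_iff)
  then have c: "0 < c"
    unfolding c_def by (auto simp: row_scale_def intro!: prod_pos mult_pos_pos divide_pos_pos)
  show ?thesis
    apply (intro exI[of _ c] conjI allI impI)
     apply (fact c)
    subgoal premises prems for a b phi \<sigma> t p
      using Jac_lower_bound[OF assms(1) is_interval_ivl prems(2) _ prems(4,5) e n0 n sum prems(7-10)] prems(3)
      unfolding c_def by simp
    done
qed

end
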